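(* For every even integer $k\ge 4$, the graph $M_{\rm II}(k)$ is not word-representable.
   Context: For even $k\ge4$, $M_{\rm II}(k)$ is the split graph with clique $C=\{c_1,\dots,c_k\}$ and independent set $I=\{b_1,b_2,a_1,\dots,a_{k-2}\}$, where $N(b_1)=\{c_1,\dots,c_{k-2},c_k\}$, $N(b_2)=\{c_2,\dots,c_k\}$, and $N(a_i)=\{c_i,c_{i+1}\}$ for $1\le i\le k-2$. A graph $G=(V,E)$ is word-representable if there is a word $w$ over $V$ such that for all distinct $a,b\in V$, $ab\in E$ iff $a$ and $b$ alternate in $w$ (i.e. the subsequence of $w$ formed by all occurrences of $a$ and $b$ is $abab\cdots$ or $baba\cdots$). *)

theory Defs
  imports Main
begin

definition alternate_in :: "'a list \<Rightarrow> 'a \<Rightarrow> 'a \<Rightarrow> bool" where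
  "alternate_in w a b \<longleftrightarrow>
     (let u = filter (\<lambda>x. x = a \<or> x = b) w in
      \<forall>i. Suc i < length u \<longrightarrow> u ! i \<noteq> u ! Suc i)"

definition represents :: "'a set \<Rightarrow> ('a \<Rightarrow> 'a \<Rightarrow> bool) \<Rightarrow> 'a list \<Rightarrow> bool" where
  "represents V E w \<longleftrightarrow> set w = V \<and>
     (\<forall>a\<in>V. \<forall>b\<in>V. a \<noteq> b \<longrightarrow> (E a b \<longleftrightarrow> alternate_in w a b))"

definition word_representable :: "'a set \<Rightarrow> ('a \<Rightarrow> 'a \<Rightarrow> bool) \<Rightarrow> bool" where
  "word_representable V E \<longleftrightarrow> (\<exists>w. represents V E w)"

datatype vtx = C nat | B1 | B2 | A nat

definition MII_V :: "nat \<Rightarrow> vtx set" where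
  "MII_V k = C ` {1..k} \<union> {B1, B2} \<union> A ` {1..k-2}"

fun MII_adj0 :: "nat \<Rightarrow> vtx \<Rightarrow> vtx \<Rightarrow> bool" where
  "MII_adj0 k (C i) (C j) = (i \<noteq> j)"
| "MII_adj0 k B1 (C j) = (j \<in> {1..k-2} \<or> j = k)"
| "MII_adj0 k B2 (C j) = (j \<in> {2..k})"
| "MII_adj0 k (A i) (C j) = (j = i \<or> j = i + 1)"
| "MII_adj0 k _ _ = False"

definition MII_E :: "nat \<Rightarrow> vtx \<Rightarrow> vtx \<Rightarrow> bool" where
  "MII_E k x y \<longleftrightarrow> MII_adj0 k x y \<or> MII_adj0 k y x"

end

(* Write x \<prec> y when x and y alternate in the representing word with x occurring first;
   on a clique this is a strict linear order, recorded by positions 0, ..., k - 1.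
   If x \<prec> m \<prec> z and b is adjacent to x and z but not to m, then x \<prec> b \<prec> z:
   any other placement of b either closes a cycle with x and z or, adding up the
   prefix-count inequalities, forces b to alternate with m.
   Since a_i sees only c_i and c_(i+1) on the clique, that pair is consecutive in the cyclic
   order of positions; so c_1, ..., c_k sit on the positions in cyclic order (up to rotation
   and reflection), and exactly one of c_1, c_(k-1) lies strictly between c_2 and c_k.
   But the chain c_1, b_2, b_1, c_(k-1), each vertex non-adjacent to the next and all adjacent
   to c_2 and c_k, transfers "lying between c_2 and c_k" from c_1 to c_(k-1) and back. *)

theory Submission
  imports Defs
begin

section \<open>Alternation in words via prefix counts\<close>

definition leads :: "'a list \<Rightarrow> 'a \<Rightarrow> 'a \<Rightarrow> bool" where
  "leads w a b \<longleftrightarrow>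
     (\<forall>t. count_list (take t w) b \<le> count_list (take t w) a \<and>
          count_list (take t w) a \<le> count_list (take t w) b + 1)"

lemma leadsD:
  "leads w a b \<Longrightarrow>
     count_list (take t w) b \<le> count_list (take t w) a \<and>
     count_list (take t w) a \<le> count_list (take t w) b + 1"
  by (simp add: leads_def)

lemma leads_Nil [simp]: "leads [] a b"
  by (simp add: leads_def)

lemma leads_Cons:
  "leads (x # w) a b \<longleftrightarrow>
     (\<forall>t. count_list (x # take t w) b \<le> count_list (x # take t w) a \<and>
          count_list (x # take t w) a \<le> count_list (x # take t w) b + 1)"
proof -
  have "(\<forall>t. P (take t (x # w))) \<longleftrightarrow> (\<forall>t. P (x # take t w))" if "P []" for P
  proof (intro iffI allI)
    fix t
    assume "\<forall>t. P (take t (x # w))"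
    then show "P (x # take t w)"
      by (metis take_Suc_Cons)
  next
    fix t
    assume "\<forall>t. P (x # take t w)"
    with that show "P (take t (x # w))"
      by (cases t) auto
  qed
  from this[of "\<lambda>u. count_list u b \<le> count_list u a \<and> count_list u a \<le> count_list u b + 1"]
  show ?thesis
    unfolding leads_def by simp
qed

lemma leads_Cons_same: "a \<noteq> b \<Longrightarrow> leads (a # w) a b \<longleftrightarrow> leads w b a"
  unfolding leads_Cons by (auto simp: leads_def)

lemma not_leads_Cons_other:
  assumes "a \<noteq> b"
  shows "\<not> leads (b # w) a b"
proof
  assume "leads (b # w) a b"
  then have "count_list (take 1 (b # w)) b \<le> count_list (take 1 (b # w)) a"
    by (rule leadsD[THEN conjunct1])
  with assms show False
    by simp
qed

lemma leads_Cons_neither: "x \<noteq> a \<Longrightarrow> x \<noteq> b \<Longrightarrow> leads (x # w) a b \<longleftrightarrow> leads w a b"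
  unfolding leads_Cons by (simp add: leads_def)

lemma leads_iff_distinct_adj_filter:
  assumes "a \<noteq> b"
  shows "leads w a b \<longleftrightarrow>
           distinct_adj (filter (\<lambda>x. x = a \<or> x = b) w) \<and>
           (filter (\<lambda>x. x = a \<or> x = b) w = [] \<or> hd (filter (\<lambda>x. x = a \<or> x = b) w) = a)"
  using assms
proof (induction w arbitrary: a b)
  case (Cons x w)
  let ?u = "filter (\<lambda>x. x = a \<or> x = b) w"
  have "?u = [] \<or> hd ?u = a \<or> hd ?u = b"
    using hd_in_set[of ?u] by auto
  consider "x = a" | "x = b" | "x \<noteq> a" "x \<noteq> b"
    by blast
  then show ?case
  proof cases
    case 1
    have "filter (\<lambda>x. x = b \<or> x = a) w = ?u"
      by (rule filter_cong) auto
    then have "leads w b a \<longleftrightarrow> distinct_adj ?u \<and> (?u = [] \<or> hd ?u = b)"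
      using Cons.IH[of b a] Cons.prems by simp
    with 1 Cons.prems \<open>?u = [] \<or> hd ?u = a \<or> hd ?u = b\<close> show ?thesis
      by (auto simp: leads_Cons_same distinct_adj_Cons)
  next
    case 2
    with Cons.prems show ?thesis
      by (simp add: not_leads_Cons_other)
  next
    case 3
    with Cons.IH[OF Cons.prems] show ?thesis
      by (simp add: leads_Cons_neither)
  qed
qed simp

lemma alternate_in_iff_leads:
  assumes "a \<noteq> b"
  shows "alternate_in w a b \<longleftrightarrow> leads w a b \<or> leads w b a"
proof -
  let ?u = "filter (\<lambda>x. x = a \<or> x = b) w"
  have "filter (\<lambda>x. x = b \<or> x = a) w = ?u"
    by (rule filter_cong) auto
  then have "leads w a b \<or> leads w b a \<longleftrightarrow> distinct_adj ?u"
    using assms leads_iff_distinct_adj_filter[of a b w] leads_iff_distinct_adj_filter[of b a w]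
      hd_in_set[of ?u] by auto
  then show ?thesis
    by (simp add: alternate_in_def Let_def distinct_adj_conv_nth)
qed

lemma leads_antisym:
  assumes "a \<in> set w" "leads w a b" "leads w b a"
  shows "a = b"
proof (rule ccontr)
  assume "a \<noteq> b"
  obtain i where "i < length w" "w ! i = a"
    using assms(1) by (metis in_set_conv_nth)
  then have "take (Suc i) w = take i w @ [a]"
    by (simp add: take_Suc_conv_app_nth)
  then have "count_list (take (Suc i) w) a = count_list (take i w) a + 1"
    "count_list (take (Suc i) w) b = count_list (take i w) b"
    using \<open>a \<noteq> b\<close> by simp_all
  moreover have "count_list (take t w) a = count_list (take t w) b" for t
    using leadsD[OF assms(2), of t] leadsD[OF assms(3), of t] by linarith
  ultimately show False
    by (metis n_not_Suc_n Suc_eq_plus1)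
qed

lemma leads_cycle_reverse:
  assumes "leads w a b" "leads w b c" "leads w c a"
  shows "leads w b a"
  unfolding leads_def
proof (intro conjI allI)
  fix t
  note facts = leadsD[OF assms(1), of t] leadsD[OF assms(2), of t] leadsD[OF assms(3), of t]
  show "count_list (take t w) a \<le> count_list (take t w) b"
    "count_list (take t w) b \<le> count_list (take t w) a + 1"
    using facts by linarith+
qed

lemma leads_chain:
  assumes "leads w a b" "leads w b c" "leads w c d" "leads w a d"
  shows "leads w a c \<and> leads w b d"
  unfolding leads_def
proof (intro conjI allI)
  fix t
  note facts = leadsD[OF assms(1), of t] leadsD[OF assms(2), of t]
    leadsD[OF assms(3), of t] leadsD[OF assms(4), of t]
  show "count_list (take t w) c \<le> count_list (take t w) a"
    "count_list (take t w) a \<le> count_list (take t w) c + 1"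
    "count_list (take t w) d \<le> count_list (take t w) b"
    "count_list (take t w) b \<le> count_list (take t w) d + 1"
    using facts by linarith+
qed

section \<open>Injective cyclic paths of residues\<close>

definition strictly_between :: "'a::linorder \<Rightarrow> 'a \<Rightarrow> 'a \<Rightarrow> bool" where
  "strictly_between a m b \<longleftrightarrow> a < m \<and> m < b \<or> b < m \<and> m < a"

definition cyclically_adjacent :: "nat \<Rightarrow> nat \<Rightarrow> nat \<Rightarrow> bool" where
  "cyclically_adjacent n a b \<longleftrightarrow> Suc a mod n = b \<or> Suc b mod n = a"

lemma add_mod_if:
  fixes t j k :: nat
  assumes "t < k" "j < k"
  shows "(t + j) mod k = (if t + j < k then t + j else t + j - k)"
proof (cases "t + j < k")
  case False
  then have "(t + j) mod k = (t + j - k) mod k"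
    by (simp add: le_mod_geq)
  with False assms show ?thesis
    by simp
qed simp

lemma Suc_mod_eq_if: "a < k \<Longrightarrow> Suc a mod k = (if Suc a = k then 0 else Suc a)"
  by (simp add: mod_if)

lemma Suc_mod_inj: "a < k \<Longrightarrow> b < k \<Longrightarrow> Suc a mod k = Suc b mod k \<Longrightarrow> a = b"
  by (auto simp: Suc_mod_eq_if split: if_splits)

lemma cyclic_path_direction:
  assumes "3 \<le> k" and inj: "inj_on q {1..n}" and range: "\<And>i. i \<in> {1..n} \<Longrightarrow> q i < k"
    and adj: "\<And>i. i \<in> {1..<n} \<Longrightarrow> cyclically_adjacent k (q i) (q (Suc i))"
  shows "(\<forall>i\<in>{1..<n}. Suc (q i) mod k = q (Suc i)) \<or> (\<forall>i\<in>{1..<n}. Suc (q (Suc i)) mod k = q i)"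
proof -
  define fwd where "fwd i \<longleftrightarrow> Suc (q i) mod k = q (Suc i)" for i
  have bwd_iff: "Suc (q (Suc i)) mod k = q i \<longleftrightarrow> \<not> fwd i" if "i \<in> {1..<n}" for i
  proof -
    have "q i < k" "q (Suc i) < k"
      using that range by simp_all
    with \<open>3 \<le> k\<close> have "\<not> (fwd i \<and> Suc (q (Suc i)) mod k = q i)"
      unfolding fwd_def by (auto simp: Suc_mod_eq_if split: if_splits)
    with adj[OF that] show ?thesis
      unfolding cyclically_adjacent_def fwd_def by blast
  qed
  \<comment> \<open>turning back would return to the vertex visited two steps earlier\<close>
  have fwd_Suc: "fwd (Suc i) \<longleftrightarrow> fwd i" if "1 \<le> i" "Suc i < n" for i
  proof -
    have "q i \<noteq> q (Suc (Suc i))"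
      using that inj by (auto dest: inj_onD)
    moreover have "q i < k" "q (Suc (Suc i)) < k"
      using that range by simp_all
    moreover have "i \<in> {1..<n}" "Suc i \<in> {1..<n}"
      using that by auto
    ultimately show ?thesis
      using bwd_iff[of i] bwd_iff[of "Suc i"] Suc_mod_inj[of "q i" k "q (Suc (Suc i))"]
      unfolding fwd_def by metis
  qed
  have "fwd (Suc j) \<longleftrightarrow> fwd 1" if "Suc j < n" for j
    using that
  proof (induction j)
    case (Suc j)
    then show ?case
      using fwd_Suc[of "Suc j"] by simp
  qed simp
  then have "fwd i \<longleftrightarrow> fwd 1" if "i \<in> {1..<n}" for i
    using that by (metis atLeastLessThan_iff not0_implies_Suc not_one_le_zero)
  then show ?thesis
    using bwd_iff unfolding fwd_def by blast
qed

lemma cyclic_path_forward_closed_form: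
  assumes "q 1 < k" and fwd: "\<And>i. i \<in> {1..<n} \<Longrightarrow> Suc (q i) mod k = q (Suc i)"
  shows "j < n \<Longrightarrow> q (Suc j) = (q 1 + j) mod k"
proof (induction j)
  case (Suc j)
  then have "q (Suc (Suc j)) = Suc ((q 1 + j) mod k) mod k"
    using fwd[of "Suc j"] by simp
  also have "\<dots> = (q 1 + Suc j) mod k"
    by (simp add: mod_Suc_eq)
  finally show ?case .
qed (use assms(1) in simp)

lemma cyclic_interval_strictly_between:
  fixes t k :: nat
  assumes "t < k" "4 \<le> k"
  shows "strictly_between ((t + 1) mod k) t ((t + (k - 1)) mod k) \<longleftrightarrow>
         \<not> strictly_between ((t + 1) mod k) ((t + (k - 2)) mod k) ((t + (k - 1)) mod k)"
proof -
  have mod_eqs: "(t + 1) mod k = (if t + 1 < k then t + 1 else t + 1 - k)"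
    "(t + (k - 2)) mod k = (if t + (k - 2) < k then t + (k - 2) else t + (k - 2) - k)"
    "(t + (k - 1)) mod k = (if t + (k - 1) < k then t + (k - 1) else t + (k - 1) - k)"
    using assms by (intro add_mod_if; simp)+
  consider "t = 0" | "t = 1" | "2 \<le> t" "t + 1 < k" | "t + 1 = k"
    using assms by linarith
  then show ?thesis
    unfolding mod_eqs strictly_between_def using assms by cases auto
qed

lemma forward_cyclic_path_strictly_between:
  assumes "4 \<le> k" and bij: "bij_betw q {1..k} {..<k}"
    and fwd: "\<And>i. i \<in> {1..<k - 1} \<Longrightarrow> Suc (q i) mod k = q (Suc i)"
  shows "strictly_between (q 2) (q 1) (q k) \<longleftrightarrow> \<not> strictly_between (q 2) (q (k - 1)) (q k)"
proof -
  define t where "t = q 1"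
  have "t < k"
    using bij_betw_apply[OF bij, of 1] assms(1) by (simp add: t_def)
  have closed: "q (Suc j) = (t + j) mod k" if "j < k - 1" for j
    using cyclic_path_forward_closed_form[of q k "k - 1" j] \<open>t < k\<close> fwd that
    unfolding t_def by blast
  have "q 2 = (t + 1) mod k" "q (k - 1) = (t + (k - 2)) mod k"
    using closed[of 1] closed[of "k - 2"] assms(1) by (simp_all add: numeral_2_eq_2 Suc_diff_Suc)
  moreover have "q k = (t + (k - 1)) mod k"
  proof -
    have "(t + (k - 1)) mod k \<in> q ` {1..k}"
      using bij_betw_imp_surj_on[OF bij] assms(1) by simp
    then obtain i where i: "i \<in> {1..k}" "q i = (t + (k - 1)) mod k"
      by (metis imageE)
    have "i = k"
    proof (rule ccontr)
      assume "i \<noteq> k"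
      with i(1) obtain j where "i = Suc j" "j < k - 1"
        by (cases i) auto
      with i(2) have "(t + j) mod k = (t + (k - 1)) mod k"
        using closed by simp
      moreover have "(t + j) mod k = (if t + j < k then t + j else t + j - k)"
        "(t + (k - 1)) mod k = (if t + (k - 1) < k then t + (k - 1) else t + (k - 1) - k)"
        using \<open>j < k - 1\<close> \<open>t < k\<close> by (intro add_mod_if; simp)+
      ultimately show False
        using \<open>j < k - 1\<close> \<open>t < k\<close> by (auto split: if_splits)
    qed
    with i show ?thesis
      by simp
  qed
  ultimately show ?thesis
    using cyclic_interval_strictly_between[OF \<open>t < k\<close> assms(1)] by (simp add: t_def)
qed

lemma strictly_between_reflect:
  fixes a m b k :: nat
  assumes "a < k" "m < k" "b < k"
  shows "strictly_between (k - 1 - a) (k - 1 - m) (k - 1 - b) \<longleftrightarrow> strictly_between a m b"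
  using assms unfolding strictly_between_def by arith

lemma cyclic_path_strictly_between:
  assumes "4 \<le> k" and bij: "bij_betw q {1..k} {..<k}"
    and adj: "\<And>i. i \<in> {1..<k - 1} \<Longrightarrow> cyclically_adjacent k (q i) (q (Suc i))"
  shows "strictly_between (q 2) (q 1) (q k) \<longleftrightarrow> \<not> strictly_between (q 2) (q (k - 1)) (q k)"
proof -
  have bound: "q i < k" if "i \<in> {1..k}" for i
    using bij_betw_apply[OF bij that] by simp
  have "inj_on q {1..k - 1}"
    using bij_betw_imp_inj_on[OF bij] by (rule inj_on_subset) auto
  with \<open>4 \<le> k\<close> bound adj
  consider (fwd) "\<And>i. i \<in> {1..<k - 1} \<Longrightarrow> Suc (q i) mod k = q (Suc i)"
    | (bwd) "\<And>i. i \<in> {1..<k - 1} \<Longrightarrow> Suc (q (Suc i)) mod k = q i"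
    using cyclic_path_direction[of k q "k - 1"] by force
  then show ?thesis
  proof cases
    case fwd
    with assms(1,2) show ?thesis
      by (rule forward_cyclic_path_strictly_between)
  next
    case bwd
    define r where "r i = k - 1 - q i" for i
    have "bij_betw (\<lambda>x. k - 1 - x) {..<k} {..<k}"
      by (rule bij_betw_byWitness[where f' = "\<lambda>x. k - 1 - x"]) auto
    with bij have "bij_betw r {1..k} {..<k}"
      unfolding r_def using bij_betw_trans[of q _ _ "\<lambda>x. k - 1 - x"] by (simp add: comp_def)
    moreover have "Suc (r i) mod k = r (Suc i)" if "i \<in> {1..<k - 1}" for i
    proof -
      have "i \<in> {1..k}" "Suc i \<in> {1..k}"
        using that by auto
      then have "q i < k" "q (Suc i) < k"
        using bound by blast+
      with bwd[OF that] show ?thesis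
        unfolding r_def by (auto simp: Suc_mod_eq_if split: if_splits)
    qed
    ultimately have "strictly_between (r 2) (r 1) (r k) \<longleftrightarrow> \<not> strictly_between (r 2) (r (k - 1)) (r k)"
      using assms(1) forward_cyclic_path_strictly_between by blast
    moreover have "q 1 < k" "q 2 < k" "q (k - 1) < k" "q k < k"
      using assms(1) bound by simp_all
    ultimately show ?thesis
      using strictly_between_reflect[of "q 2" k "q 1" "q k"]
        strictly_between_reflect[of "q 2" k "q (k - 1)" "q k"]
      unfolding r_def by simp
  qed
qed

section \<open>Alternating pairs in a representing word\<close>

locale represented_graph =
  fixes V :: "'a set" and E :: "'a \<Rightarrow> 'a \<Rightarrow> bool" and w :: "'a list"
  assumes adj_sym: "E x y \<Longrightarrow> E y x"
    and represents: "represents V E w"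
begin

definition prec :: "'a \<Rightarrow> 'a \<Rightarrow> bool" where
  "prec x y \<longleftrightarrow> x \<in> V \<and> y \<in> V \<and> x \<noteq> y \<and> leads w x y"

lemma adj_iff_prec:
  assumes "x \<in> V" "y \<in> V" "x \<noteq> y"
  shows "E x y \<longleftrightarrow> prec x y \<or> prec y x"
proof -
  have "E x y \<longleftrightarrow> alternate_in w x y"
    using represents assms unfolding represents_def by blast
  also have "\<dots> \<longleftrightarrow> leads w x y \<or> leads w y x"
    using assms(3) by (rule alternate_in_iff_leads)
  finally show ?thesis
    using assms unfolding prec_def by blast
qed

lemma prec_adj: "prec x y \<Longrightarrow> E x y"
  using adj_iff_prec unfolding prec_def by blast

lemma prec_asym: "prec x y \<Longrightarrow> \<not> prec y x"
  using represents leads_antisym[of x w y] unfolding represents_def prec_def by blast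

lemma prec_trans:
  assumes "prec x y" "prec y z" "E x z"
  shows "prec x z"
proof -
  have "\<not> prec z x"
  proof
    assume "prec z x"
    with assms(1,2) have "leads w y x"
      unfolding prec_def by (blast intro: leads_cycle_reverse)
    with assms(1) have "prec y x"
      unfolding prec_def by blast
    with assms(1) show False
      by (simp add: prec_asym)
  qed
  moreover have "x \<noteq> z"
    using assms(1,2) prec_asym by blast
  moreover have "x \<in> V" "z \<in> V"
    using assms(1,2) unfolding prec_def by blast+
  ultimately show ?thesis
    using assms(3) adj_iff_prec by blast
qed

lemma prec_chain_adj:
  assumes "prec a b" "prec b c" "prec c d" "prec a d"
  shows "E a c \<and> E b d"
proof -
  have "a \<noteq> c" "b \<noteq> d"
    using assms(1-3) prec_asym by blast+
  moreover have "leads w a c" "leads w b d"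
    using assms leads_chain[of w a b c d] unfolding prec_def by blast+
  ultimately have "prec a c" "prec b d"
    using assms unfolding prec_def by blast+
  then show ?thesis
    using prec_adj by blast
qed

definition between :: "'a \<Rightarrow> 'a \<Rightarrow> 'a \<Rightarrow> bool" where
  "between x m z \<longleftrightarrow> prec x m \<and> prec m z \<or> prec z m \<and> prec m x"

lemma prec_between_if_nonadjacent:
  assumes "prec x m" "prec m z" "E x z" "b \<in> V" "E b x" "E b z" "\<not> E b m"
  shows "prec x b \<and> prec b z"
proof -
  have "prec x z"
    using assms(1-3) by (rule prec_trans)
  have "E x m" "E z m"
    using assms(1,2) prec_adj adj_sym by blast+
  with assms(7) have "b \<noteq> x" "b \<noteq> z"
    by blast+
  moreover have "x \<in> V" "z \<in> V"
    using assms(1,2) unfolding prec_def by blast+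
  ultimately have "prec x b \<or> prec b x" "prec z b \<or> prec b z"
    using assms(4-6) adj_iff_prec by blast+
  moreover have "\<not> (prec x b \<and> prec z b)"
    using assms(1,2,7) prec_chain_adj[of x m z b] adj_sym by blast
  moreover have "\<not> (prec b x \<and> prec b z)"
    using assms(1,2,7) prec_chain_adj[of b x m z] by blast
  moreover have "\<not> (prec b x \<and> prec z b)"
    using \<open>prec x z\<close> assms(3) adj_sym prec_trans[of z b x] prec_asym by blast
  ultimately show ?thesis
    by blast
qed

lemma between_if_nonadjacent:
  assumes "between x m z" "E x z" "b \<in> V" "E b x" "E b z" "\<not> E b m"
  shows "between x b z"
proof (cases "prec x m \<and> prec m z")
  case True
  then show ?thesis
    using assms(2-6) prec_between_if_nonadjacent[of x m z b] unfolding between_def by blast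
next
  case False
  with assms(1) have "prec z m \<and> prec m x"
    unfolding between_def by blast
  then show ?thesis
    using assms(2-6) adj_sym prec_between_if_nonadjacent[of z m x b] unfolding between_def by blast
qed

end

locale represented_graph_clique = represented_graph +
  fixes Q :: "'a set"
  assumes finite_clique: "finite Q"
    and clique_subset: "Q \<subseteq> V"
    and clique_adj: "x \<in> Q \<Longrightarrow> y \<in> Q \<Longrightarrow> x \<noteq> y \<Longrightarrow> E x y"
begin

definition rank :: "'a \<Rightarrow> nat" where
  "rank x = card {y \<in> Q. prec y x}"

lemma rank_strict_mono:
  assumes "x \<in> Q" "y \<in> Q" "prec x y"
  shows "rank x < rank y"
  unfolding rank_def
proof (rule psubset_card_mono)
  have "prec z y" if "z \<in> Q" "prec z x" for z
  proof -
    have "z \<noteq> y"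
      using assms(3) that(2) prec_asym by blast
    with that assms show ?thesis
      using clique_adj prec_trans by blast
  qed
  then have "{z \<in> Q. prec z x} \<subseteq> {z \<in> Q. prec z y}"
    by blast
  moreover have "x \<in> {z \<in> Q. prec z y} - {z \<in> Q. prec z x}"
    using assms unfolding prec_def by blast
  ultimately show "{z \<in> Q. prec z x} \<subset> {z \<in> Q. prec z y}"
    by blast
qed (use finite_clique in simp)

lemma prec_total: "x \<in> Q \<Longrightarrow> y \<in> Q \<Longrightarrow> x \<noteq> y \<Longrightarrow> prec x y \<or> prec y x"
  using clique_adj clique_subset adj_iff_prec by blast

lemma rank_less_iff:
  assumes "x \<in> Q" "y \<in> Q"
  shows "rank x < rank y \<longleftrightarrow> prec x y"
proof
  assume "rank x < rank y"
  then have "x \<noteq> y"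
    by blast
  with assms have "prec x y \<or> prec y x"
    by (rule prec_total)
  with assms \<open>rank x < rank y\<close> show "prec x y"
    using rank_strict_mono[of y x] by linarith
qed (use assms rank_strict_mono in blast)

lemma inj_on_rank: "inj_on rank Q"
proof (rule inj_onI)
  fix x y
  assume "x \<in> Q" "y \<in> Q" "rank x = rank y"
  then show "x = y"
    using prec_total rank_strict_mono by fastforce
qed

lemma rank_less_card:
  assumes "x \<in> Q"
  shows "rank x < card Q"
proof -
  have "rank x \<le> card (Q - {x})"
    unfolding rank_def using finite_clique by (intro card_mono) (auto simp: prec_def)
  also have "\<dots> < card Q"
    using finite_clique assms by (rule card_Diff1_less)
  finally show ?thesis .
qed

lemma bij_betw_rank: "bij_betw rank Q {..<card Q}"
proof -
  have "rank ` Q \<subseteq> {..<card Q}"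
    using rank_less_card by blast
  moreover have "card (rank ` Q) = card {..<card Q}"
    using card_image[OF inj_on_rank] by simp
  ultimately have "rank ` Q = {..<card Q}"
    by (intro card_subset_eq) auto
  with inj_on_rank show ?thesis
    unfolding bij_betw_def by blast
qed

lemma between_iff_rank:
  "x \<in> Q \<Longrightarrow> m \<in> Q \<Longrightarrow> z \<in> Q \<Longrightarrow> between x m z \<longleftrightarrow> strictly_between (rank x) (rank m) (rank z)"
  by (simp add: between_def strictly_between_def rank_less_iff)

lemma exists_rank: "r < card Q \<Longrightarrow> \<exists>x \<in> Q. rank x = r"
  using bij_betw_imp_surj_on[OF bij_betw_rank] by (metis imageE lessThan_iff)

lemma clique_vertices_between_neighbours:
  assumes "v \<in> V" "x \<in> Q" "y \<in> Q" "prec x y" "E v x" "E v y"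
    and only: "\<And>c. c \<in> Q \<Longrightarrow> E v c \<Longrightarrow> c = x \<or> c = y"
    and "m \<in> Q" "strictly_between (rank x) (rank m) (rank y)"
    and "c \<in> Q" "c \<noteq> x" "c \<noteq> y"
  shows "strictly_between (rank x) (rank c) (rank y)"
proof -
  have "E x y"
    using assms(4) by (rule prec_adj)
  have "m \<noteq> x" "m \<noteq> y"
    using assms(9) unfolding strictly_between_def by auto
  with only \<open>m \<in> Q\<close> have "\<not> E v m"
    by blast
  with assms(1-3,5,6,8,9) \<open>E x y\<close> have "between x v y"
    using between_if_nonadjacent[of x m y v] between_iff_rank by blast
  moreover have "\<not> E c v"
    using only assms(10-12) adj_sym by blast
  ultimately have "between x c y"
    using assms(2,3,10-12) \<open>E x y\<close> clique_adj clique_subset between_if_nonadjacent[of x v y c]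
    by blast
  with assms(2,3,10) show ?thesis
    by (simp add: between_iff_rank)
qed

lemma rank_two_neighbours_consecutive:
  assumes "v \<in> V" "x \<in> Q" "y \<in> Q" "prec x y" "E v x" "E v y"
    and only: "\<And>c. c \<in> Q \<Longrightarrow> E v c \<Longrightarrow> c = x \<or> c = y"
  shows "rank y = Suc (rank x) \<or> rank x = 0 \<and> Suc (rank y) = card Q"
proof (cases "rank y = Suc (rank x)")
  case False
  moreover have "rank x < rank y" "rank y < card Q"
    using assms(2-4) rank_less_iff rank_less_card by blast+
  ultimately obtain m where "m \<in> Q" "rank m = Suc (rank x)"
    using exists_rank[of "Suc (rank x)"] by auto
  with \<open>rank x < rank y\<close> False
  have m_between: "strictly_between (rank x) (rank m) (rank y)"
    unfolding strictly_between_def by linarith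
  have "rank x = 0"
  proof (rule ccontr)
    assume "rank x \<noteq> 0"
    then obtain c where "c \<in> Q" "rank c = rank x - 1"
      using exists_rank[of "rank x - 1"] \<open>rank y < card Q\<close> \<open>rank x < rank y\<close>
      by (meson less_imp_diff_less order.strict_trans)
    with \<open>rank x \<noteq> 0\<close> \<open>rank x < rank y\<close> show False
      using clique_vertices_between_neighbours[OF assms \<open>m \<in> Q\<close> m_between, of c]
      unfolding strictly_between_def by fastforce
  qed
  moreover have "Suc (rank y) = card Q"
  proof (rule ccontr)
    assume "Suc (rank y) \<noteq> card Q"
    then obtain c where "c \<in> Q" "rank c = Suc (rank y)"
      using exists_rank[of "Suc (rank y)"] \<open>rank y < card Q\<close> by auto
    with \<open>rank x < rank y\<close> show False
      using clique_vertices_between_neighbours[OF assms \<open>m \<in> Q\<close> m_between, of c]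
      unfolding strictly_between_def by fastforce
  qed
  ultimately show ?thesis
    by blast
qed simp

lemma two_clique_neighbours_cyclically_adjacent:
  assumes "v \<in> V" "x \<in> Q" "y \<in> Q" "x \<noteq> y" "E v x" "E v y"
    and "\<And>c. c \<in> Q \<Longrightarrow> E v c \<Longrightarrow> c = x \<or> c = y"
  shows "cyclically_adjacent (card Q) (rank x) (rank y)"
proof -
  have "rank x < card Q" "rank y < card Q"
    using assms(2,3) rank_less_card by blast+
  moreover from assms(2-4) have "prec x y \<or> prec y x"
    by (rule prec_total)
  then have "rank y = Suc (rank x) \<or> rank x = 0 \<and> Suc (rank y) = card Q \<or>
             rank x = Suc (rank y) \<or> rank y = 0 \<and> Suc (rank x) = card Q"
    using rank_two_neighbours_consecutive[of v x y] rank_two_neighbours_consecutive[of v y x] assms by blast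
  ultimately show ?thesis
    unfolding cyclically_adjacent_def by auto
qed

end

section \<open>The graph M_II(k)\<close>

lemma card_MII_clique: "card (C ` {1..k}) = k"
  using card_image[of C "{1..k}"] by (simp add: inj_on_def)

lemma MII_V_C [simp]: "C i \<in> MII_V k \<longleftrightarrow> 1 \<le> i \<and> i \<le> k"
  and MII_V_A [simp]: "A i \<in> MII_V k \<longleftrightarrow> 1 \<le> i \<and> i \<le> k - 2"
  and MII_V_B [simp]: "B1 \<in> MII_V k" "B2 \<in> MII_V k"
  by (auto simp: MII_V_def)

locale MII_representation =
  fixes k :: nat and w :: "vtx list"
  assumes four_le_k: "4 \<le> k"
    and represents_MII: "represents (MII_V k) (MII_E k) w"

sublocale MII_representation \<subseteq> represented_graph_clique "MII_V k" "MII_E k" w "C ` {1..k}"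
  using represents_MII by unfold_locales (auto simp: MII_E_def)

context MII_representation
begin

definition pos :: "nat \<Rightarrow> nat" where
  "pos i = rank (C i)"

lemma bij_betw_pos: "bij_betw pos {1..k} {..<k}"
proof -
  have "bij_betw C {1..k} (C ` {1..k})"
    by (rule bij_betw_imageI) (auto simp: inj_on_def)
  from bij_betw_trans[OF this bij_betw_rank] show ?thesis
    unfolding card_MII_clique pos_def comp_def .
qed

lemma cyclically_adjacent_pos:
  assumes "i \<in> {1..<k - 1}"
  shows "cyclically_adjacent k (pos i) (pos (Suc i))"
proof -
  have "cyclically_adjacent (card (C ` {1..k})) (rank (C i)) (rank (C (Suc i)))"
    using assms by (intro two_clique_neighbours_cyclically_adjacent[of "A i"]) (auto simp: MII_E_def)
  then show ?thesis
    unfolding card_MII_clique pos_def .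
qed

lemma between_C1_iff_between_Ck1:
  "between (C 2) (C 1) (C k) \<longleftrightarrow> between (C 2) (C (k - 1)) (C k)"
proof
  assume "between (C 2) (C 1) (C k)"
  then have "between (C 2) B2 (C k)"
    by (rule between_if_nonadjacent) (use four_le_k in \<open>auto simp: MII_E_def\<close>)
  then have "between (C 2) B1 (C k)"
    by (rule between_if_nonadjacent) (use four_le_k in \<open>auto simp: MII_E_def\<close>)
  then show "between (C 2) (C (k - 1)) (C k)"
    by (rule between_if_nonadjacent) (use four_le_k in \<open>auto simp: MII_E_def\<close>)
next
  assume "between (C 2) (C (k - 1)) (C k)"
  then have "between (C 2) B1 (C k)"
    by (rule between_if_nonadjacent) (use four_le_k in \<open>auto simp: MII_E_def\<close>)
  then have "between (C 2) B2 (C k)"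
    by (rule between_if_nonadjacent) (use four_le_k in \<open>auto simp: MII_E_def\<close>)
  then show "between (C 2) (C 1) (C k)"
    by (rule between_if_nonadjacent) (use four_le_k in \<open>auto simp: MII_E_def\<close>)
qed

end

lemma not_represents_MII:
  assumes "4 \<le> k"
  shows "\<not> represents (MII_V k) (MII_E k) w"
proof
  assume "represents (MII_V k) (MII_E k) w"
  with assms interpret MII_representation k w
    by unfold_locales
  have "between (C 2) (C m) (C k) \<longleftrightarrow> strictly_between (pos 2) (pos m) (pos k)"
    if "m \<in> {1..k}" for m
    using that assms by (simp add: between_iff_rank pos_def)
  then show False
    using cyclic_path_strictly_between[OF assms bij_betw_pos cyclically_adjacent_pos]
      between_C1_iff_between_Ck1 assms by simp
qed

theorem lemma10:
  fixes k :: nat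
  assumes "even k" and "k \<ge> 4"
  shows "\<not> word_representable (MII_V k) (MII_E k)"
  using not_represents_MII[OF assms(2)] unfolding word_representable_def by blast

end
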